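(* Let $K\ge 2$ and let $r_1\prec r_2\prec\cdots\prec r_K$ be ordered ranks. Let $D=\{(\mathbf{x}_i,y_i)\}_{i=1}^N$ be a training set with inputs $\mathbf{x}_i\in\mathcal{X}$ and ranks $y_i\in\{r_1,\dots,r_K\}$, and for $k=1,\dots,K-1$ define the extended binary labels $y_i^{(k)}=\mathbb{1}\{y_i\succ r_k\}\in\{0,1\}$. Let $g(\mathbf{x},\mathbf{W})\in\mathbb{R}$ be the (scalar) output of a model with parameters $\mathbf{W}$, let $\mathbf{b}=(b_1,\dots,b_{K-1})\in\mathbb{R}^{K-1}$ be bias parameters, let $\sigma(z)=1/(1+\exp(-z))$, and let $\lambda^{(1)},\dots,\lambda^{(K-1)}>0$ be fixed task weights. Consider the loss $$L(\mathbf{W},\mathbf{b})=-\sum_{i=1}^N\sum_{k=1}^{K-1}\lambda^{(k)}\Big[\log\big(\sigma(g(\mathbf{x}_i,\mathbf{W})+b_k)\big)\,y_i^{(k)}+\log\big(1-\sigma(g(\mathbf{x}_i,\mathbf{W})+b_k)\big)\,(1-y_i^{(k)})\Big].$$ Then any optimal solution $(\mathbf{W}^*,\mathbf{b}^* )$ minimizing $L$ satisfies $b_1^*\ge b_2^*\ge\cdots\ge b_{K-1}^*$.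
   Context: This is the loss of the CORAL (consistent rank logits) framework: a single shared score $g(\mathbf{x},\mathbf{W})$ is fed to $K-1$ binary classifiers that differ only in their bias terms $b_k$; the predicted probability for task $k$ is $\widehat P(y^{(k)}=1)=\sigma(g(\mathbf{x},\mathbf{W})+b_k)$. *)

theory Defs
  imports Complex_Main
begin

definition sigmoid :: "real \<Rightarrow> real" where
  "sigmoid z = 1 / (1 + exp (- z))"

definition ext_label :: "('r::linorder) \<Rightarrow> 'r \<Rightarrow> real" where
  "ext_label yi rk = (if rk < yi then 1 else 0)"

definition coral_loss ::
  "nat \<Rightarrow> nat \<Rightarrow> (nat \<Rightarrow> 'r::linorder) \<Rightarrow> (nat \<Rightarrow> 'x) \<Rightarrow> (nat \<Rightarrow> 'r)
   \<Rightarrow> ('x \<Rightarrow> 'w \<Rightarrow> real) \<Rightarrow> (nat \<Rightarrow> real) \<Rightarrow> 'w \<Rightarrow> (nat \<Rightarrow> real) \<Rightarrow> real" where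
  "coral_loss K N r x y g lam W b =
     - (\<Sum>i=1..N. \<Sum>k=1..K-1. lam k *
          (ln (sigmoid (g (x i) W + b k)) * ext_label (y i) (r k)
           + ln (1 - sigmoid (g (x i) W + b k)) * (1 - ext_label (y i) (r k))))"

end

theory Submission
  imports Defs
begin

text \<open>Fix the optimal weights and vary a single bias \<open>b\<^sub>k\<close>: only task \<open>k\<close> depends on it,
  and setting the derivative of its logistic log-likelihood to zero gives the calibration
  identity \<open>\<Sum>\<^sub>i \<sigma>(g(x\<^sub>i) + b\<^sub>k) = \<Sum>\<^sub>i y\<^sub>i\<^sup>(\<^sup>k\<^sup>)\<close>. The right-hand side does not increase with \<open>k\<close>,
  because the ranks are ordered, while the left-hand side is strictly increasing in \<open>b\<^sub>k\<close>;
  hence \<open>b\<^sub>k \<ge> b\<^sub>k\<^sub>+\<^sub>1\<close>.\<close>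

definition logistic_loglik :: "real \<Rightarrow> real \<Rightarrow> real" where
  "logistic_loglik z e = ln (sigmoid z) * e + ln (1 - sigmoid z) * (1 - e)"

lemma logistic_loglik_eq: "logistic_loglik z e = e * z - ln (1 + exp z)"
proof -
  have pos: "0 < 1 + exp (- z)"
    by (simp add: add_pos_pos)
  have ln_pos: "ln (sigmoid z) = - ln (1 + exp (- z))"
    unfolding sigmoid_def using pos by (simp add: ln_div)
  have "1 - sigmoid z = exp (- z) / (1 + exp (- z))"
    unfolding sigmoid_def using pos by (simp add: field_simps)
  then have ln_neg: "ln (1 - sigmoid z) = - z - ln (1 + exp (- z))"
    using pos by (simp add: ln_div)
  have ln_exp: "ln (1 + exp z) = z + ln (1 + exp (- z))"
  proof -
    have "1 + exp z = exp z * (1 + exp (- z))"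
      by (simp add: algebra_simps exp_minus)
    then show ?thesis
      using pos by (simp add: ln_mult)
  qed
  show ?thesis
    unfolding logistic_loglik_def ln_pos ln_neg ln_exp by (simp add: algebra_simps)
qed

lemma sigmoid_eq_exp_div: "sigmoid z = exp z / (1 + exp z)"
  unfolding sigmoid_def by (simp add: exp_minus field_simps add_pos_pos)

lemma has_real_derivative_logistic_loglik:
  "((\<lambda>z. logistic_loglik z e) has_real_derivative e - sigmoid z) (at z)"
proof -
  have "((\<lambda>z. e * z - ln (1 + exp z)) has_real_derivative e - exp z / (1 + exp z)) (at z)"
    by (auto intro!: derivative_eq_intros simp: add_pos_pos)
  then show ?thesis
    by (simp add: logistic_loglik_eq sigmoid_eq_exp_div)
qed

lemma strict_mono_sigmoid: "strict_mono sigmoid"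
  unfolding strict_mono_def sigmoid_def
  by (simp add: divide_strict_left_mono add_pos_pos)

lemma sum_sigmoid_shift_strict_mono:
  assumes "finite A" "A \<noteq> {}" "t < t'"
  shows "(\<Sum>i\<in>A. sigmoid (s i + t)) < (\<Sum>i\<in>A. sigmoid (s i + t'))"
  using assms strict_mono_sigmoid by (intro sum_strict_mono) (auto simp: strict_mono_def)

lemma logistic_intercept_calibration:
  fixes s e :: "'i \<Rightarrow> real"
  assumes max: "\<forall>t'. (\<Sum>i\<in>A. logistic_loglik (s i + t') (e i))
                     \<le> (\<Sum>i\<in>A. logistic_loglik (s i + t) (e i))"
  shows "(\<Sum>i\<in>A. sigmoid (s i + t)) = (\<Sum>i\<in>A. e i)"
proof -
  have "((\<lambda>t. \<Sum>i\<in>A. logistic_loglik (s i + t) (e i))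
          has_real_derivative (\<Sum>i\<in>A. e i - sigmoid (s i + t))) (at t)"
  proof (rule DERIV_sum)
    fix i
    have "((\<lambda>t. s i + t) has_real_derivative 1) (at t)"
      by (auto intro!: derivative_eq_intros)
    from DERIV_chain2[OF has_real_derivative_logistic_loglik[of "e i" "s i + t"] this]
    show "((\<lambda>t. logistic_loglik (s i + t) (e i)) has_real_derivative e i - sigmoid (s i + t)) (at t)"
      by simp
  qed
  then have "(\<Sum>i\<in>A. e i - sigmoid (s i + t)) = 0"
    by (rule DERIV_local_max[of _ _ _ 1]) (use max in auto)
  then show ?thesis
    by (simp add: sum_subtractf)
qed

lemma ext_label_antimono: "a \<le> b \<Longrightarrow> ext_label y b \<le> ext_label y a"
  unfolding ext_label_def by auto

lemma coral_loss_eq_sum_tasks: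
  "coral_loss K N r x y g lam W b =
     - (\<Sum>k=1..K-1. lam k * (\<Sum>i=1..N. logistic_loglik (g (x i) W + b k) (ext_label (y i) (r k))))"
  unfolding coral_loss_def logistic_loglik_def sum_distrib_left
  by (subst sum.swap) (rule refl)

lemma coral_loss_fun_upd:
  assumes "k \<in> {1..K-1}"
  shows "coral_loss K N r x y g lam W (b(k := t)) =
           coral_loss K N r x y g lam W b
           + lam k * (\<Sum>i=1..N. logistic_loglik (g (x i) W + b k) (ext_label (y i) (r k)))
           - lam k * (\<Sum>i=1..N. logistic_loglik (g (x i) W + t) (ext_label (y i) (r k)))"
proof -
  let ?task = "\<lambda>b j. lam j * (\<Sum>i=1..N. logistic_loglik (g (x i) W + b j) (ext_label (y i) (r j)))"
  have "(\<Sum>j=1..K-1. ?task b' j) = ?task b' k + (\<Sum>j\<in>{1..K-1} - {k}. ?task b j)"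
    if "\<forall>j\<noteq>k. b' j = b j" for b'
    using assms that by (simp add: sum.remove)
  from this[of b] this[of "b(k := t)"] show ?thesis
    unfolding coral_loss_eq_sum_tasks by simp
qed

lemma coral_optimal_bias_calibrated:
  assumes "k \<in> {1..K-1}" "lam k > 0"
    and opt: "\<forall>W b. coral_loss K N r x y g lam Wopt bopt \<le> coral_loss K N r x y g lam W b"
  shows "(\<Sum>i=1..N. sigmoid (g (x i) Wopt + bopt k)) = (\<Sum>i=1..N. ext_label (y i) (r k))"
proof (rule logistic_intercept_calibration, intro allI)
  fix t
  have "coral_loss K N r x y g lam Wopt bopt \<le> coral_loss K N r x y g lam Wopt (bopt(k := t))"
    using opt by blast
  then show "(\<Sum>i=1..N. logistic_loglik (g (x i) Wopt + t) (ext_label (y i) (r k)))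
              \<le> (\<Sum>i=1..N. logistic_loglik (g (x i) Wopt + bopt k) (ext_label (y i) (r k)))"
    using assms(2) by (simp add: coral_loss_fun_upd[OF assms(1)])
qed

theorem theorem1:
  fixes K N :: nat and r :: "nat \<Rightarrow> 'r::linorder" and x :: "nat \<Rightarrow> 'x"
    and y :: "nat \<Rightarrow> 'r" and g :: "'x \<Rightarrow> 'w \<Rightarrow> real" and lam :: "nat \<Rightarrow> real"
    and Wopt :: 'w and bopt :: "nat \<Rightarrow> real"
  assumes "K \<ge> 2"
    and "strict_mono_on {1..K} r"
    and "N \<ge> 1"
    and "\<forall>i\<in>{1..N}. y i \<in> r ` {1..K}"
    and "\<forall>k\<in>{1..K-1}. lam k > 0"
    and "\<forall>W b. coral_loss K N r x y g lam Wopt bopt \<le> coral_loss K N r x y g lam W b"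
  shows "\<forall>k. 1 \<le> k \<and> k < K - 1 \<longrightarrow> bopt k \<ge> bopt (k + 1)"
proof (intro allI impI)
  fix k assume k: "1 \<le> k \<and> k < K - 1"
  let ?s = "\<lambda>i. g (x i) Wopt"
  have calibrated: "(\<Sum>i=1..N. sigmoid (?s i + bopt j)) = (\<Sum>i=1..N. ext_label (y i) (r j))"
    if "j \<in> {1..K-1}" for j
    using that assms(5,6) by (intro coral_optimal_bias_calibrated) auto
  have tasks: "k \<in> {1..K-1}" "k + 1 \<in> {1..K-1}"
    using k by auto
  have "r k < r (k + 1)"
    using k assms(2) by (auto intro: strict_mono_onD)
  then have "(\<Sum>i=1..N. ext_label (y i) (r (k + 1))) \<le> (\<Sum>i=1..N. ext_label (y i) (r k))"
    by (intro sum_mono ext_label_antimono) simp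
  then have "(\<Sum>i=1..N. sigmoid (?s i + bopt (k + 1))) \<le> (\<Sum>i=1..N. sigmoid (?s i + bopt k))"
    using calibrated[OF tasks(1)] calibrated[OF tasks(2)] by simp
  then show "bopt k \<ge> bopt (k + 1)"
    using sum_sigmoid_shift_strict_mono[of "{1..N}" "bopt k" "bopt (k + 1)" ?s] assms(3)
    by force
qed

end
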